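(* Let $F\colon[0,+\infty)^N\to[0,+\infty)$ be a metric preserving function. Then for all $(s_i)_{i=1}^N,(s'_i)_{i=1}^N\in[0,+\infty)^N$: (1) $|F(s_1,\dots,s_N)-F(s'_1,\dots,s'_N)|\le F(|s_1-s'_1|,\dots,|s_N-s'_N|)$; (2) if $s_i\le 2s'_i$ for every $i$, then $F(s_1,\dots,s_N)\le 2F(s'_1,\dots,s'_N)$.
   Context: A function $F\colon[0,+\infty)^N\to[0,+\infty)$ is metric preserving if for any metric spaces $(X_1,d_1),\dots,(X_N,d_N)$, $d_F((x_i),(x'_i)):=F(d_1(x_1,x'_1),\dots,d_N(x_N,x'_N))$ is a metric on $X_1\times\cdots\times X_N$. *)

theory Defs
  imports "HOL-Analysis.Analysis"
begin

text \<open>Points of [0,+inf)^N are vectors s :: real^'n with nonnegative components,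
  where the finite index type 'n has N = CARD('n) elements.
  F is metric preserving if it maps [0,+inf)^N into [0,+inf) and, for every
  family of metric spaces (X i, d i) indexed by 'n, the function
  (x, x') |-> F (d_1 (x_1, x'_1), ..., d_N (x_N, x'_N)) is a metric on the product.
  The carriers of the factor metric spaces are taken to be subsets of the reals
  (every metric space of interest here is determined by at most three points,
  so this loses no generality).\<close>

definition nonneg_vec :: "real^'n \<Rightarrow> bool" where
  "nonneg_vec s \<longleftrightarrow> (\<forall>i. 0 \<le> s $ i)"

definition metric_preserving :: "(real^'n \<Rightarrow> real) \<Rightarrow> bool" where
  "metric_preserving F \<longleftrightarrow>
     (\<forall>s. nonneg_vec s \<longrightarrow> 0 \<le> F s) \<and>
     (\<forall>(X :: 'n \<Rightarrow> real set) (d :: 'n \<Rightarrow> real \<Rightarrow> real \<Rightarrow> real).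
        (\<forall>i. Metric_space (X i) (d i)) \<longrightarrow>
        Metric_space {x :: real^'n. \<forall>i. x $ i \<in> X i}
                     (\<lambda>x x'. F (\<chi> i. d i (x $ i) (x' $ i))))"

end

theory Submission
  imports Defs
begin

text \<open>Both inequalities are instances of the triangle inequality for the product metric
  d_F. For (1), take every factor to be the real line with its usual metric and compare
  the points s, s' and 0. For (2), take in the i-th factor the three-point space with
  sides s'_i, s'_i and s_i (a metric exactly because s_i \<le> 2 s'_i); going from one end
  to the other through the middle point gives F s \<le> F s' + F s'.\<close>

lemma metric_preserving_triangle:
  fixes F :: "real^'n \<Rightarrow> real" and X :: "'n \<Rightarrow> real set"
  assumes "metric_preserving F" and "\<And>i. Metric_space (X i) (d i)"
    and "\<And>i. x $ i \<in> X i" "\<And>i. y $ i \<in> X i" "\<And>i. z $ i \<in> X i"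
  shows "F (\<chi> i. d i (x $ i) (z $ i)) \<le> F (\<chi> i. d i (x $ i) (y $ i)) + F (\<chi> i. d i (y $ i) (z $ i))"
proof -
  have "Metric_space {x :: real^'n. \<forall>i. x $ i \<in> X i} (\<lambda>x x'. F (\<chi> i. d i (x $ i) (x' $ i)))"
    using assms(1,2) unfolding metric_preserving_def by blast
  then show ?thesis
    by (rule Metric_space.triangle) (use assms(3-5) in auto)
qed

lemma metric_preserving_abs_diff_le:
  fixes F :: "real^'n \<Rightarrow> real"
  assumes "metric_preserving F" and "nonneg_vec s" "nonneg_vec s'"
  shows "\<bar>F s - F s'\<bar> \<le> F (\<chi> i. \<bar>s $ i - s' $ i\<bar>)"
proof -
  have triangle: "F (\<chi> i. dist (x $ i) (z $ i)) \<le> F (\<chi> i. dist (x $ i) (y $ i)) + F (\<chi> i. dist (y $ i) (z $ i))"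
    for x y z :: "real^'n"
    using metric_preserving_triangle[OF assms(1), of "\<lambda>_. UNIV" "\<lambda>_. dist"]
    by (simp add: Met_TC.Metric_space_axioms)
  have dist_zero: "(\<chi> i. dist (v $ i) (0 $ i)) = v" "(\<chi> i. dist (0 $ i) (v $ i)) = v"
    if "nonneg_vec v" for v :: "real^'n"
    using that by (auto simp: nonneg_vec_def dist_real_def vec_eq_iff)
  have dist_diff: "(\<chi> i. dist (s $ i) (s' $ i)) = (\<chi> i. \<bar>s $ i - s' $ i\<bar>)"
    "(\<chi> i. dist (s' $ i) (s $ i)) = (\<chi> i. \<bar>s $ i - s' $ i\<bar>)"
    by (auto simp: dist_real_def vec_eq_iff abs_minus_commute)
  have "F s \<le> F (\<chi> i. \<bar>s $ i - s' $ i\<bar>) + F s'"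
    using triangle[where x=s and y=s' and z=0] unfolding dist_zero[OF assms(2)] dist_zero[OF assms(3)] dist_diff .
  moreover have "F s' \<le> F (\<chi> i. \<bar>s $ i - s' $ i\<bar>) + F s"
    using triangle[where x=s' and y=s and z=0] unfolding dist_zero[OF assms(2)] dist_zero[OF assms(3)] dist_diff .
  ultimately show ?thesis by linarith
qed

text \<open>The points 0, 1, 2 with d(0,1) = d(1,2) = b and d(0,2) = a; a side of length 0
  is realised by collapsing its endpoints onto 0 (note b = 0 forces a = 0).\<close>

lemma three_point_Metric_space:
  fixes a b :: real
  assumes "0 \<le> a" "a \<le> 2 * b"
  shows "Metric_space {0 :: real, if b = 0 then 0 else 1, if a = 0 then 0 else 2}
           (\<lambda>u v. if u = v then 0 else if u + v = 2 then a else b)"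
  unfolding Metric_space_def using assms
  by (auto simp: add.commute split: if_splits)

lemma metric_preserving_le_double:
  fixes F :: "real^'n \<Rightarrow> real"
  assumes "metric_preserving F" and "nonneg_vec s" "nonneg_vec s'"
    and le: "\<And>i. s $ i \<le> 2 * s' $ i"
  shows "F s \<le> 2 * F s'"
proof -
  define X where "X i = {0, if s' $ i = 0 then 0 else 1, if s $ i = 0 then 0 else 2 :: real}" for i
  define d where "d i u v = (if u = v then 0 else if u + v = 2 then s $ i else s' $ i)" for i and u v :: real
  define x :: "real^'n" where "x = (\<chi> i. 0)"
  define y :: "real^'n" where "y = (\<chi> i. if s' $ i = 0 then 0 else 1)"
  define z :: "real^'n" where "z = (\<chi> i. if s $ i = 0 then 0 else 2)"
  have "Metric_space (X i) (d i)" for i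
    unfolding X_def d_def using assms(2) le
    by (intro three_point_Metric_space) (auto simp: nonneg_vec_def)
  moreover have "x $ i \<in> X i" "y $ i \<in> X i" "z $ i \<in> X i" for i
    by (auto simp: x_def y_def z_def X_def)
  moreover have "s $ i = 0" if "s' $ i = 0" for i
    using le[of i] assms(2) that unfolding nonneg_vec_def by (metis mult_zero_right order_antisym)
  then have "(\<chi> i. d i (x $ i) (z $ i)) = s" "(\<chi> i. d i (x $ i) (y $ i)) = s'"
    "(\<chi> i. d i (y $ i) (z $ i)) = s'"
    by (auto simp: vec_eq_iff d_def x_def y_def z_def)
  ultimately show ?thesis
    using metric_preserving_triangle[OF assms(1), of X d x y z] by simp
qed

theorem mainTheorem5:
  fixes F :: "real^'n \<Rightarrow> real"
  assumes "metric_preserving F"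
  shows "\<forall>s s'. nonneg_vec s \<and> nonneg_vec s' \<longrightarrow>
           \<bar>F s - F s'\<bar> \<le> F (\<chi> i. \<bar>s $ i - s' $ i\<bar>)
         \<and> ((\<forall>i. s $ i \<le> 2 * s' $ i) \<longrightarrow> F s \<le> 2 * F s')"
  using metric_preserving_abs_diff_le[OF assms] metric_preserving_le_double[OF assms] by blast

end
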